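(* Let $X$ be a $T_0$ topological space and $x,y\in X$. Then $x\ll_{\operatorname{Irr}} y$ if and only if for every net $(x_i)_{i\in I}$ in $X$ that $\operatorname{Irr}$-converges to $y$, there exists $k\in I$ such that $x_i\ge x$ for all $i\ge k$.
   Context: For a topological space $X$, a nonempty subset $E$ is irreducible if whenever $E\subseteq A_1\cup A_2$ with $A_1,A_2$ closed, $E\subseteq A_1$ or $E\subseteq A_2$. The specialisation order is $x\le y$ iff $x\in\operatorname{cl}(\{y\})$; $\uparrow x=\{z:z\ge x\}$; $\bigvee$ denotes supremum in this order. $\operatorname{Irr}^+(X)$ is the set of irreducible subsets whose supremum exists. $x\ll_{\operatorname{Irr}} y$ iff for every $E\in\operatorname{Irr}^+(X)$ with $\bigvee E\ge y$, $E\cap\uparrow x\ne\emptyset$. A net $(x_i)_{i\in I}$ is a map from a preorder $(I,\le)$ to $X$. A net $(x_i)_{i\in I}$ $\operatorname{Irr}$-converges to $y$ if there is $E\in\operatorname{Irr}^+(X)$ with $\bigvee E\ge y$ such that for each $e\in E$ there is $k(e)\in I$ with $x_i\ge e$ for all $i\ge k(e)$. *)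

theory Defs
  imports "HOL-Analysis.Analysis"
begin

definition spec_le :: "'a topology \<Rightarrow> 'a \<Rightarrow> 'a \<Rightarrow> bool" where
  "spec_le T x y \<longleftrightarrow> x \<in> topspace T \<and> y \<in> topspace T \<and> x \<in> T closure_of {y}"

definition up_set :: "'a topology \<Rightarrow> 'a \<Rightarrow> 'a set" where
  "up_set T x = {z \<in> topspace T. spec_le T x z}"

definition is_sup :: "'a topology \<Rightarrow> 'a set \<Rightarrow> 'a \<Rightarrow> bool" where
  "is_sup T E s \<longleftrightarrow> s \<in> topspace T \<and> (\<forall>e\<in>E. spec_le T e s) \<and>
     (\<forall>u\<in>topspace T. (\<forall>e\<in>E. spec_le T e u) \<longrightarrow> spec_le T s u)"

definition irreducible_in :: "'a topology \<Rightarrow> 'a set \<Rightarrow> bool" where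
  "irreducible_in T E \<longleftrightarrow> E \<noteq> {} \<and> E \<subseteq> topspace T \<and>
     (\<forall>A1 A2. closedin T A1 \<and> closedin T A2 \<and> E \<subseteq> A1 \<union> A2 \<longrightarrow> E \<subseteq> A1 \<or> E \<subseteq> A2)"

definition Irr_plus :: "'a topology \<Rightarrow> 'a set set" where
  "Irr_plus T = {E. irreducible_in T E \<and> (\<exists>s. is_sup T E s)}"

text \<open>\<Or>E \<ge> y (the supremum is unique in a T0 space).\<close>
definition sup_ge :: "'a topology \<Rightarrow> 'a set \<Rightarrow> 'a \<Rightarrow> bool" where
  "sup_ge T E y \<longleftrightarrow> (\<exists>s. is_sup T E s \<and> spec_le T y s)"

definition way_below_Irr :: "'a topology \<Rightarrow> 'a \<Rightarrow> 'a \<Rightarrow> bool" where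
  "way_below_Irr T x y \<longleftrightarrow>
     (\<forall>E\<in>Irr_plus T. sup_ge T E y \<longrightarrow> E \<inter> up_set T x \<noteq> {})"

definition is_net :: "'a topology \<Rightarrow> 'i set \<Rightarrow> ('i \<Rightarrow> 'i \<Rightarrow> bool) \<Rightarrow> ('i \<Rightarrow> 'a) \<Rightarrow> bool" where
  "is_net T I le net \<longleftrightarrow> (\<forall>i\<in>I. le i i) \<and>
     (\<forall>i\<in>I. \<forall>j\<in>I. \<forall>k\<in>I. le i j \<and> le j k \<longrightarrow> le i k) \<and> net ` I \<subseteq> topspace T"

definition Irr_converges :: "'a topology \<Rightarrow> 'i set \<Rightarrow> ('i \<Rightarrow> 'i \<Rightarrow> bool) \<Rightarrow> ('i \<Rightarrow> 'a) \<Rightarrow> 'a \<Rightarrow> bool" where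
  "Irr_converges T I le net y \<longleftrightarrow>
     (\<exists>E\<in>Irr_plus T. sup_ge T E y \<and>
        (\<forall>e\<in>E. \<exists>k\<in>I. \<forall>i\<in>I. le k i \<longrightarrow> spec_le T e (net i)))"

text \<open>The net condition of the proposition, for nets whose index sets live in type 'i.\<close>
definition net_cond :: "'i itself \<Rightarrow> 'a topology \<Rightarrow> 'a \<Rightarrow> 'a \<Rightarrow> bool" where
  "net_cond _ T x y \<longleftrightarrow>
     (\<forall>(I::'i set) le net. is_net T I le net \<and> Irr_converges T I le net y \<longrightarrow>
        (\<exists>k\<in>I. \<forall>i\<in>I. le k i \<longrightarrow> spec_le T x (net i)))"

end

theory Submission
  imports Defs
begin

text \<open>The forward direction is transitivity of the specialisation order: the witness set of an
  Irr-convergent net contains an element above x, and the net is eventually above that element.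
  For the converse, every E in Irr^+ with supremum above y is itself a net, indexed by E under the
  specialisation order with the identity map, and it Irr-converges to y witnessed by E itself;
  an index beyond which this net lies above x is an element of E above x.\<close>

lemma spec_le_refl: "a \<in> topspace T \<Longrightarrow> spec_le T a a"
  unfolding spec_le_def using closure_of_subset[of "{a}" T] by auto

lemma spec_le_trans:
  assumes "spec_le T a b" "spec_le T b c"
  shows "spec_le T a c"
proof -
  have "{b} \<subseteq> T closure_of {c}" using assms(2) unfolding spec_le_def by auto
  then have "T closure_of {b} \<subseteq> T closure_of {c}" by (simp add: closure_of_minimal)
  then show ?thesis using assms unfolding spec_le_def by auto
qed

lemma way_below_Irr_imp_net_cond:
  assumes "way_below_Irr T x y"
  shows "net_cond TYPE('i) T x y"
  unfolding net_cond_def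
proof (intro allI impI)
  fix I :: "'i set" and le net
  assume "is_net T I le net \<and> Irr_converges T I le net y"
  then obtain E where E: "E \<in> Irr_plus T" "sup_ge T E y"
    and eventually_above: "\<forall>e\<in>E. \<exists>k\<in>I. \<forall>i\<in>I. le k i \<longrightarrow> spec_le T e (net i)"
    unfolding Irr_converges_def by blast
  from assms E obtain e where "e \<in> E" and "spec_le T x e"
    unfolding way_below_Irr_def up_set_def by blast
  with eventually_above show "\<exists>k\<in>I. \<forall>i\<in>I. le k i \<longrightarrow> spec_le T x (net i)"
    by (meson spec_le_trans)
qed

lemma Irr_plus_subset_topspace: "E \<in> Irr_plus T \<Longrightarrow> E \<subseteq> topspace T"
  unfolding Irr_plus_def irreducible_in_def by auto

lemma is_net_id_spec_le:
  assumes "E \<subseteq> topspace T"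
  shows "is_net T E (spec_le T) id"
  using assms spec_le_trans unfolding is_net_def by (auto intro: spec_le_refl)

lemma Irr_converges_id_spec_le:
  assumes "E \<in> Irr_plus T" "sup_ge T E y"
  shows "Irr_converges T E (spec_le T) id y"
  using assms unfolding Irr_converges_def by auto

lemma net_cond_imp_way_below_Irr:
  fixes T :: "'a topology"
  assumes "net_cond TYPE('a) T x y"
  shows "way_below_Irr T x y"
  unfolding way_below_Irr_def
proof (intro ballI impI)
  fix E assume E: "E \<in> Irr_plus T" "sup_ge T E y"
  have E_sub: "E \<subseteq> topspace T" using E(1) by (rule Irr_plus_subset_topspace)
  have "is_net T E (spec_le T) id \<and> Irr_converges T E (spec_le T) id y"
    using is_net_id_spec_le[OF E_sub] Irr_converges_id_spec_le[OF E] ..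
  from assms[unfolded net_cond_def, rule_format, OF this]
  obtain k where k: "k \<in> E" and above: "\<forall>i\<in>E. spec_le T k i \<longrightarrow> spec_le T x i"
    by auto
  have "spec_le T k k" using k E_sub by (blast intro: spec_le_refl)
  then have "spec_le T x k" using above k by blast
  then show "E \<inter> up_set T x \<noteq> {}" using k E_sub unfolding up_set_def by auto
qed

theorem proposition4p2:
  fixes T :: "'a topology" and x y :: 'a
  assumes "t0_space T" and "x \<in> topspace T" and "y \<in> topspace T"
  shows "(way_below_Irr T x y \<longleftrightarrow> net_cond TYPE('a) T x y) \<and>
         (way_below_Irr T x y \<longrightarrow> net_cond TYPE('i) T x y)"
  using way_below_Irr_imp_net_cond[of T x y, where 'i='a]
    way_below_Irr_imp_net_cond[of T x y, where 'i='i] net_cond_imp_way_below_Irr[of T x y]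
  by auto

end
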